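(* Fix $M\in\mathbb{N}^+$ and consider relative value iteration on the truncated MDP $\Lambda^M$: let $V_0(s)=0$ for all $s\in\{1,\dots,M\}$ and, for $v\ge0$ and $s\in\{1,\dots,M\}$, $$V_{v+1}(s)=\min_{a\in\mathcal{A}}\Big[u(s,a)+Q_aV_v(1)+(1-Q_a)V_v(\min\{s+1,M\})-V_v(1)\Big],$$ and let $\phi^{(v)}(s)$ be any minimizer $a$ of the bracket $u(s,a)+Q_aV_v(1)+(1-Q_a)V_v(\min\{s+1,M\})$ over $a\in\mathcal{A}$. Then for every $v\ge0$ and all states $1\le s_1<s_2\le M$, $Q_{\phi^{(v)}(s_1)}\le Q_{\phi^{(v)}(s_2)}$.
   Context: Fix $N\in\mathbb{N}^+$ vehicle types $\mathcal{N}=\{1,\dots,N\}$ with arrival probabilities $p_n\in(0,1]$, mean operational costs $c_n\ge0$ and mean sensing capabilities $r_n\in(0,1]$. Fix $\beta\in(0,1)$, $\epsilon>0$. Actions: $\mathcal{A}=2^{\mathcal{N}}$. Success probability $Q_\emptyset=0$, $Q_a=1-\prod_{n\in a}(1-r_np_n)$; expected recruitment cost $E_a=\sum_{n\in a}p_nc_n$. Immediate cost at state $\delta\in\mathbb{N}^+$: $u(\delta,a)=(1-\beta)E_a-\beta\epsilon\big(Q_a(\delta^2+2\delta)-(1+\delta)^2\big)$. The truncated MDP $\Lambda^M$ has state space $\{1,\dots,M\}$, action space $\mathcal{A}$, immediate cost $u$, and transitions: from state $s$ under action $a$, go to state $1$ with probability $Q_a$ and to state $\min\{s+1,M\}$ with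 probability $1-Q_a$. *)

theory Defs
  imports Complex_Main
begin

text \<open>Vehicle types are 1..N; an action is a subset of {1..N}.\<close>

definition actions :: "nat \<Rightarrow> nat set set" where
  "actions N = Pow {1..N}"

definition Qa :: "(nat \<Rightarrow> real) \<Rightarrow> (nat \<Rightarrow> real) \<Rightarrow> nat set \<Rightarrow> real" where
  "Qa p r a = (if a = {} then 0 else 1 - (\<Prod>n\<in>a. 1 - r n * p n))"

definition Ea :: "(nat \<Rightarrow> real) \<Rightarrow> (nat \<Rightarrow> real) \<Rightarrow> nat set \<Rightarrow> real" where
  "Ea p c a = (\<Sum>n\<in>a. p n * c n)"

definition ucost :: "(nat \<Rightarrow> real) \<Rightarrow> (nat \<Rightarrow> real) \<Rightarrow> (nat \<Rightarrow> real) \<Rightarrow> real \<Rightarrow> real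
    \<Rightarrow> nat \<Rightarrow> nat set \<Rightarrow> real" where
  "ucost p c r \<beta> \<epsilon> \<delta> a =
     (1 - \<beta>) * Ea p c a
     - \<beta> * \<epsilon> * (Qa p r a * (real \<delta> ^ 2 + 2 * real \<delta>) - (1 + real \<delta>) ^ 2)"

definition rvi_bracket :: "(nat \<Rightarrow> real) \<Rightarrow> (nat \<Rightarrow> real) \<Rightarrow> (nat \<Rightarrow> real) \<Rightarrow> real \<Rightarrow> real
    \<Rightarrow> nat \<Rightarrow> (nat \<Rightarrow> real) \<Rightarrow> nat \<Rightarrow> nat set \<Rightarrow> real" where
  "rvi_bracket p c r \<beta> \<epsilon> M V s a =
     ucost p c r \<beta> \<epsilon> s a + Qa p r a * V 1 + (1 - Qa p r a) * V (min (s + 1) M)"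

fun RVI :: "nat \<Rightarrow> (nat \<Rightarrow> real) \<Rightarrow> (nat \<Rightarrow> real) \<Rightarrow> (nat \<Rightarrow> real) \<Rightarrow> real \<Rightarrow> real
    \<Rightarrow> nat \<Rightarrow> nat \<Rightarrow> nat \<Rightarrow> real" where
  "RVI N p c r \<beta> \<epsilon> M 0 s = 0"
| "RVI N p c r \<beta> \<epsilon> M (Suc v) s =
     (MIN a\<in>actions N. rvi_bracket p c r \<beta> \<epsilon> M (RVI N p c r \<beta> \<epsilon> M v) s a)
     - RVI N p c r \<beta> \<epsilon> M v 1"

end

theory Submission
  imports Defs
begin

(* The bracket is affine in the success probability Q_a, and its slope decreases strictly
   in the state because the RVI iterates are nondecreasing in the state. Comparing the
   minimality of the two minimizers at two states (the exchange argument behind Topkis'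
   theorem) then forces Q_a to grow along the states. *)

lemma Qa_nonneg_le_1:
  assumes "\<forall>n\<in>a. 0 \<le> p n \<and> p n \<le> 1" and "\<forall>n\<in>a. 0 \<le> r n \<and> r n \<le> 1"
  shows "0 \<le> Qa p r a \<and> Qa p r a \<le> 1"
proof -
  have factor: "0 \<le> 1 - r n * p n \<and> 1 - r n * p n \<le> 1" if "n \<in> a" for n
    using assms that mult_le_one[of "r n" "p n"] by auto
  have "0 \<le> (\<Prod>n\<in>a. 1 - r n * p n)" "(\<Prod>n\<in>a. 1 - r n * p n) \<le> 1"
    using factor by (auto intro: prod_nonneg prod_le_1)
  then show ?thesis
    unfolding Qa_def by auto
qed

lemma actions_finite: "finite (actions N)"
  and empty_in_actions: "{} \<in> actions N"
  and subset_of_actions: "a \<in> actions N \<Longrightarrow> a \<subseteq> {1..N}"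
  by (auto simp: actions_def)

lemma mono_MIN:
  fixes f :: "'s::order \<Rightarrow> 'a \<Rightarrow> 'b::linorder"
  assumes "finite A" "A \<noteq> {}" "\<And>a. a \<in> A \<Longrightarrow> mono (\<lambda>s. f s a)"
  shows "mono (\<lambda>s. MIN a\<in>A. f s a)"
proof (rule monoI)
  fix x y :: 's assume "x \<le> y"
  then have "(MIN a\<in>A. f x a) \<le> f y b" if "b \<in> A" for b
    using assms that by (meson Min_le finite_imageI image_eqI monoD order_trans)
  then show "(MIN a\<in>A. f x a) \<le> (MIN a\<in>A. f y a)"
    using assms by simp
qed

lemma rvi_bracket_mono:
  assumes "mono V" "0 \<le> Qa p r a" "Qa p r a \<le> 1" "0 \<le> \<beta>" "0 \<le> \<epsilon>"
  shows "mono (\<lambda>s. rvi_bracket p c r \<beta> \<epsilon> M V s a)"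
proof (rule monoI)
  fix s t :: nat assume "s \<le> t"
  let ?Q = "Qa p r a"
  have bracket: "rvi_bracket p c r \<beta> \<epsilon> M V x a = (1 - \<beta>) * Ea p c a + ?Q * V 1
      + \<beta> * \<epsilon> * ((1 - ?Q) * (real x ^ 2 + 2 * real x) + 1) + (1 - ?Q) * V (min (x + 1) M)"
    for x
    by (simp add: rvi_bracket_def ucost_def algebra_simps power2_eq_square)
  have "V (min (s + 1) M) \<le> V (min (t + 1) M)"
    using \<open>mono V\<close> \<open>s \<le> t\<close> by (simp add: monoD)
  then have "(1 - ?Q) * V (min (s + 1) M) \<le> (1 - ?Q) * V (min (t + 1) M)"
    using assms by (intro mult_left_mono) auto
  moreover have "real s ^ 2 + 2 * real s \<le> real t ^ 2 + 2 * real t"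
    using \<open>s \<le> t\<close> by (intro add_mono power_mono) auto
  then have "\<beta> * \<epsilon> * ((1 - ?Q) * (real s ^ 2 + 2 * real s) + 1)
      \<le> \<beta> * \<epsilon> * ((1 - ?Q) * (real t ^ 2 + 2 * real t) + 1)"
    using assms by (intro mult_left_mono add_right_mono) auto
  ultimately show "rvi_bracket p c r \<beta> \<epsilon> M V s a \<le> rvi_bracket p c r \<beta> \<epsilon> M V t a"
    unfolding bracket by linarith
qed

lemma mono_RVI:
  assumes "\<forall>n\<in>{1..N}. 0 \<le> p n \<and> p n \<le> 1" "\<forall>n\<in>{1..N}. 0 \<le> r n \<and> r n \<le> 1"
    and "0 \<le> \<beta>" "0 \<le> \<epsilon>"
  shows "mono (RVI N p c r \<beta> \<epsilon> M v)"
proof (induction v)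
  case 0
  show ?case
    by (simp add: monoI)
next
  case (Suc v)
  have "mono (\<lambda>s. rvi_bracket p c r \<beta> \<epsilon> M (RVI N p c r \<beta> \<epsilon> M v) s a)" if "a \<in> actions N" for a
    using Suc assms Qa_nonneg_le_1[of a p r] subset_of_actions[OF that]
    by (intro rvi_bracket_mono) auto
  then have "mono (\<lambda>s. MIN a\<in>actions N. rvi_bracket p c r \<beta> \<epsilon> M (RVI N p c r \<beta> \<epsilon> M v) s a)"
    using actions_finite empty_in_actions by (intro mono_MIN) auto
  then show ?case
    by (auto intro!: monoI dest: monoD)
qed

definition rvi_slope :: "real \<Rightarrow> real \<Rightarrow> nat \<Rightarrow> (nat \<Rightarrow> real) \<Rightarrow> nat \<Rightarrow> real" where
  "rvi_slope \<beta> \<epsilon> M V s = V 1 - V (min (s + 1) M) - \<beta> * \<epsilon> * (real s ^ 2 + 2 * real s)"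

lemma rvi_bracket_affine_in_Qa:
  "rvi_bracket p c r \<beta> \<epsilon> M V s a
     = (\<beta> * \<epsilon> * (1 + real s) ^ 2 + V (min (s + 1) M))
       + (1 - \<beta>) * Ea p c a + Qa p r a * rvi_slope \<beta> \<epsilon> M V s"
  by (simp add: rvi_bracket_def ucost_def rvi_slope_def algebra_simps)

lemma rvi_slope_strict_antimono:
  assumes "mono V" "0 < \<beta>" "0 < \<epsilon>" "s < t"
  shows "rvi_slope \<beta> \<epsilon> M V t < rvi_slope \<beta> \<epsilon> M V s"
proof -
  have "V (min (s + 1) M) \<le> V (min (t + 1) M)"
    using assms by (auto intro: monoD)
  moreover have "real s ^ 2 + 2 * real s < real t ^ 2 + 2 * real t"
    using \<open>s < t\<close> by (intro add_less_le_mono power_strict_mono) auto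
  then have "\<beta> * \<epsilon> * (real s ^ 2 + 2 * real s) < \<beta> * \<epsilon> * (real t ^ 2 + 2 * real t)"
    using assms by simp
  ultimately show ?thesis
    unfolding rvi_slope_def by linarith
qed

lemma minimizer_weight_antimono:
  fixes F :: "'s \<Rightarrow> 'a \<Rightarrow> real"
  assumes F: "\<And>s a. F s a = k s + h a + q a * w s"
    and "w t < w s"
    and "F s a \<le> F s b" and "F t b \<le> F t a"
  shows "q a \<le> q b"
proof -
  have "(q a - q b) * (w s - w t) \<le> 0"
    using assms(3,4) unfolding F by (simp add: algebra_simps)
  then show ?thesis
    using \<open>w t < w s\<close> by (simp add: mult_le_0_iff)
qed

theorem lemma3:
  fixes N M :: nat and p c r :: "nat \<Rightarrow> real" and \<beta> \<epsilon> :: real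
    and \<phi> :: "nat \<Rightarrow> nat \<Rightarrow> nat set"
  assumes "N \<ge> 1"
    and "\<forall>n\<in>{1..N}. 0 < p n \<and> p n \<le> 1"
    and "\<forall>n\<in>{1..N}. 0 \<le> c n"
    and "\<forall>n\<in>{1..N}. 0 < r n \<and> r n \<le> 1"
    and "0 < \<beta>" and "\<beta> < 1" and "0 < \<epsilon>"
    and "M \<ge> 1"
    and phi_min: "\<forall>v s. 1 \<le> s \<and> s \<le> M \<longrightarrow>
            \<phi> v s \<in> actions N \<and>
            (\<forall>a\<in>actions N. rvi_bracket p c r \<beta> \<epsilon> M (RVI N p c r \<beta> \<epsilon> M v) s (\<phi> v s)
                            \<le> rvi_bracket p c r \<beta> \<epsilon> M (RVI N p c r \<beta> \<epsilon> M v) s a)"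
  shows "\<forall>v s1 s2. 1 \<le> s1 \<and> s1 < s2 \<and> s2 \<le> M \<longrightarrow> Qa p r (\<phi> v s1) \<le> Qa p r (\<phi> v s2)"
proof (intro allI impI)
  fix v s1 s2 assume states: "1 \<le> s1 \<and> s1 < s2 \<and> s2 \<le> M"
  let ?V = "RVI N p c r \<beta> \<epsilon> M v"
  have "mono ?V"
    using assms(2,4,5,7) by (intro mono_RVI) auto
  then have "rvi_slope \<beta> \<epsilon> M ?V s2 < rvi_slope \<beta> \<epsilon> M ?V s1"
    using assms(5,7) states by (intro rvi_slope_strict_antimono) auto
  moreover have "rvi_bracket p c r \<beta> \<epsilon> M ?V s1 (\<phi> v s1) \<le> rvi_bracket p c r \<beta> \<epsilon> M ?V s1 (\<phi> v s2)"
    and "rvi_bracket p c r \<beta> \<epsilon> M ?V s2 (\<phi> v s2) \<le> rvi_bracket p c r \<beta> \<epsilon> M ?V s2 (\<phi> v s1)"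
    using phi_min states by auto
  ultimately show "Qa p r (\<phi> v s1) \<le> Qa p r (\<phi> v s2)"
    by (rule minimizer_weight_antimono[OF rvi_bracket_affine_in_Qa])
qed

end
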